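(* Under the standing setup, fix a neighborhood $n$ with $p_n>0$ and $X_n\in(0,1)$, and let $\delta_{B,n}=\mathrm{Cov}(Y,X\mid N=n)$. (i) If $\delta_{B,n}\ge0$, then $D_n\in[0,D^+_{MOB,n}]$, $Y^1_n\in[Y_n,Y^{1+}_{MOB,n}]$ and $Y^0_n\in[Y^{0-}_{MOB,n},Y_n]$. (ii) If $\delta_{B,n}\le0$, then $D_n\in[D^-_{MOB,n},0]$, $Y^1_n\in[Y^{1-}_{MOB,n},Y_n]$ and $Y^0_n\in[Y_n,Y^{0+}_{MOB,n}]$. (iii) Each of these bounds is sharp under the respective sign assumption (absent additional information).
   Context: Let $(X,Y,N)$ be a random triple with $X\in\{0,1\}$, $Y$ real-valued, $N$ taking values in a finite set $\mathcal N$. Write $p_n=\Pr(N=n)$, $X_n=\mathbb E[X\mid N=n]$, $Y_n=\mathbb E[Y\mid N=n]$. Fix reals $\underline Y\le\overline Y$ and assume $\mathbb E[Y\mid X=x,N=n]\in[\underline Y,\overline Y]$ whenever $\Pr(X=x,N=n)>0$. Neighborhood group means $Y^x_n=\mathbb E[Y\mid X=x,N=n]$ and $D_n=Y^1_n-Y^0_n$. Neighborhood method-of-bounds quantities: $Y^{1+}_{MOB,n}=\min\{(Y_n-\underline Y(1-X_n))/X_n,\overline Y\}$, $Y^{0-}_{MOB,n}=\max\{(Y_n-\overline Y X_n)/(1-X_n),\underline Y\}$, $Y^{1-}_{MOB,n}=\max\{(Y_n-\overline Y(1-X_n))/X_n,\underline Y\}$, $Y^{0+}_{MOB,n}=\min\{(Y_n-\underline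 Y X_n)/(1-X_n),\overline Y\}$, $D^+_{MOB,n}=Y^{1+}_{MOB,n}-Y^{0-}_{MOB,n}$, $D^-_{MOB,n}=Y^{1-}_{MOB,n}-Y^{0+}_{MOB,n}$. Sharpness under an assumption $\mathcal A$: the parameter lies in the interval for every joint distribution satisfying the standing assumptions and $\mathcal A$, and every value in the interval is attained by some joint distribution of $(X,Y,N)$ with the same observed $(p_m,X_m,Y_m)_{m\in\mathcal N}$, satisfying the standing bound and $\mathcal A$. *)

theory Defs
  imports "HOL-Probability.Probability"
begin

text \<open>A joint distribution of (X,Y,N) is represented by a probability space M with
random variables X :: 'a \<Rightarrow> bool (X = 1 iff True), Y :: 'a \<Rightarrow> real, N :: 'a \<Rightarrow> 'n.\<close>

definition evt :: "'a measure \<Rightarrow> ('a \<Rightarrow> bool) \<Rightarrow> 'a set" where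
  "evt M P = {\<omega> \<in> space M. P \<omega>}"

definition cmean :: "'a measure \<Rightarrow> ('a \<Rightarrow> real) \<Rightarrow> 'a set \<Rightarrow> real" where
  "cmean M f B = (\<integral>\<omega>. indicator B \<omega> * f \<omega> \<partial>M) / measure M B"

definition nbhd_prob :: "'a measure \<Rightarrow> ('a \<Rightarrow> 'n) \<Rightarrow> 'n \<Rightarrow> real" where
  "nbhd_prob M N n = measure M (evt M (\<lambda>\<omega>. N \<omega> = n))"

definition nbhd_X :: "'a measure \<Rightarrow> ('a \<Rightarrow> bool) \<Rightarrow> ('a \<Rightarrow> 'n) \<Rightarrow> 'n \<Rightarrow> real" where
  "nbhd_X M X N n = cmean M (\<lambda>\<omega>. of_bool (X \<omega>)) (evt M (\<lambda>\<omega>. N \<omega> = n))"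

definition nbhd_Y :: "'a measure \<Rightarrow> ('a \<Rightarrow> real) \<Rightarrow> ('a \<Rightarrow> 'n) \<Rightarrow> 'n \<Rightarrow> real" where
  "nbhd_Y M Y N n = cmean M Y (evt M (\<lambda>\<omega>. N \<omega> = n))"

text \<open>Group mean Y^x_n = E[Y | X = x, N = n] (x = True means X = 1).\<close>
definition grp_Y :: "'a measure \<Rightarrow> ('a \<Rightarrow> bool) \<Rightarrow> ('a \<Rightarrow> real) \<Rightarrow> ('a \<Rightarrow> 'n) \<Rightarrow> bool \<Rightarrow> 'n \<Rightarrow> real" where
  "grp_Y M X Y N x n = cmean M Y (evt M (\<lambda>\<omega>. X \<omega> = x \<and> N \<omega> = n))"

definition grp_prob :: "'a measure \<Rightarrow> ('a \<Rightarrow> bool) \<Rightarrow> ('a \<Rightarrow> 'n) \<Rightarrow> bool \<Rightarrow> 'n \<Rightarrow> real" where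
  "grp_prob M X N x n = measure M (evt M (\<lambda>\<omega>. X \<omega> = x \<and> N \<omega> = n))"

definition nbhd_D :: "'a measure \<Rightarrow> ('a \<Rightarrow> bool) \<Rightarrow> ('a \<Rightarrow> real) \<Rightarrow> ('a \<Rightarrow> 'n) \<Rightarrow> 'n \<Rightarrow> real" where
  "nbhd_D M X Y N n = grp_Y M X Y N True n - grp_Y M X Y N False n"

definition nbhd_cov :: "'a measure \<Rightarrow> ('a \<Rightarrow> bool) \<Rightarrow> ('a \<Rightarrow> real) \<Rightarrow> ('a \<Rightarrow> 'n) \<Rightarrow> 'n \<Rightarrow> real" where
  "nbhd_cov M X Y N n =
     cmean M (\<lambda>\<omega>. Y \<omega> * of_bool (X \<omega>)) (evt M (\<lambda>\<omega>. N \<omega> = n))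
     - nbhd_Y M Y N n * nbhd_X M X N n"

definition standing :: "'a measure \<Rightarrow> ('a \<Rightarrow> bool) \<Rightarrow> ('a \<Rightarrow> real) \<Rightarrow> ('a \<Rightarrow> 'n) \<Rightarrow> real \<Rightarrow> real \<Rightarrow> bool" where
  "standing M X Y N lo hi \<longleftrightarrow>
     prob_space M \<and> X \<in> M \<rightarrow>\<^sub>M count_space UNIV \<and> N \<in> M \<rightarrow>\<^sub>M count_space UNIV \<and>
     integrable M Y \<and> lo \<le> hi \<and>
     (\<forall>x m. grp_prob M X N x m > 0 \<longrightarrow> lo \<le> grp_Y M X Y N x m \<and> grp_Y M X Y N x m \<le> hi)"

definition Y1plus_MOB :: "real \<Rightarrow> real \<Rightarrow> real \<Rightarrow> real \<Rightarrow> real" where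
  "Y1plus_MOB lo hi xn yn = min ((yn - lo * (1 - xn)) / xn) hi"
definition Y0minus_MOB :: "real \<Rightarrow> real \<Rightarrow> real \<Rightarrow> real \<Rightarrow> real" where
  "Y0minus_MOB lo hi xn yn = max ((yn - hi * xn) / (1 - xn)) lo"
definition Y1minus_MOB :: "real \<Rightarrow> real \<Rightarrow> real \<Rightarrow> real \<Rightarrow> real" where
  "Y1minus_MOB lo hi xn yn = max ((yn - hi * (1 - xn)) / xn) lo"
definition Y0plus_MOB :: "real \<Rightarrow> real \<Rightarrow> real \<Rightarrow> real \<Rightarrow> real" where
  "Y0plus_MOB lo hi xn yn = min ((yn - lo * xn) / (1 - xn)) hi"
definition Dplus_MOB :: "real \<Rightarrow> real \<Rightarrow> real \<Rightarrow> real \<Rightarrow> real" where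
  "Dplus_MOB lo hi xn yn = Y1plus_MOB lo hi xn yn - Y0minus_MOB lo hi xn yn"
definition Dminus_MOB :: "real \<Rightarrow> real \<Rightarrow> real \<Rightarrow> real \<Rightarrow> real" where
  "Dminus_MOB lo hi xn yn = Y1minus_MOB lo hi xn yn - Y0plus_MOB lo hi xn yn"

text \<open>Alternative joint distributions (witnesses for sharpness) are distributions of
(X,Y,N) on bool \<times> real \<times> 'n, given as pmfs, with the coordinate projections.\<close>
abbreviation pX :: "bool \<times> real \<times> 'n \<Rightarrow> bool" where "pX \<equiv> fst"
abbreviation pY :: "bool \<times> real \<times> 'n \<Rightarrow> real" where "pY \<equiv> (\<lambda>\<omega>. fst (snd \<omega>))"
abbreviation pN :: "bool \<times> real \<times> 'n \<Rightarrow> 'n" where "pN \<equiv> (\<lambda>\<omega>. snd (snd \<omega>))"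

definition same_observed :: "(bool \<times> real \<times> 'n) pmf \<Rightarrow> 'a measure \<Rightarrow> ('a \<Rightarrow> bool) \<Rightarrow> ('a \<Rightarrow> real) \<Rightarrow> ('a \<Rightarrow> 'n) \<Rightarrow> bool" where
  "same_observed q M X Y N \<longleftrightarrow>
     (\<forall>m. nbhd_prob (measure_pmf q) pN m = nbhd_prob M N m \<and>
          nbhd_X (measure_pmf q) pX pN m = nbhd_X M X N m \<and>
          nbhd_Y (measure_pmf q) pY pN m = nbhd_Y M Y N m)"

end

theory Submission
  imports Defs
begin

text \<open>Within the neighbourhood, \<open>Y\<^sub>n = X\<^sub>n Y\<^sup>1\<^sub>n + (1 - X\<^sub>n) Y\<^sup>0\<^sub>n\<close> and
  \<open>Cov(Y, X | N = n) = X\<^sub>n (1 - X\<^sub>n) D\<^sub>n\<close>, so the sign of the covariance is the sign of \<open>D\<^sub>n\<close>.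
  The pairs of group means in \<open>[lo, hi]\<close> compatible with \<open>Y\<^sub>n\<close> form the segment
  \<open>(Y\<^sub>n + (1 - X\<^sub>n) d, Y\<^sub>n - X\<^sub>n d)\<close>, and the method-of-bounds quantities are exactly its
  endpoints: the segment is feasible precisely for \<open>d \<in> [D\<^sup>-, D\<^sup>+]\<close>.
  For sharpness, observed quantities only depend on cell probabilities and cell means, so any
  feasible pair is realised by the discrete distribution that collapses every cell \<open>(x, m)\<close>
  to a point mass at its (possibly modified) mean.\<close>

lemma Y1plus_Y0minus_mixture:
  fixes x y lo hi :: real
  assumes x: "0 < x" "x < 1" and y: "lo \<le> y" "y \<le> hi"
  shows "x * Y1plus_MOB lo hi x y + (1 - x) * Y0minus_MOB lo hi x y = y"
proof -
  define U where "U = (y - lo * (1 - x)) / x"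
  define L where "L = (y - hi * x) / (1 - x)"
  have U: "x * U = y - lo * (1 - x)" and L: "(1 - x) * L = y - hi * x"
    using x unfolding U_def L_def by simp_all
  have "U \<le> hi \<longleftrightarrow> x * U \<le> x * hi" using x by simp
  also have "\<dots> \<longleftrightarrow> (1 - x) * L \<le> (1 - x) * lo" unfolding U L by (simp add: algebra_simps)
  also have "\<dots> \<longleftrightarrow> L \<le> lo" using x by simp
  finally have "U \<le> hi \<longleftrightarrow> L \<le> lo" .
  then show ?thesis
    unfolding Y1plus_MOB_def Y0minus_MOB_def U_def[symmetric] L_def[symmetric]
    using U L by (cases "U \<le> hi") (auto simp: algebra_simps)
qed

lemma Y1plus_MOB_neg: "Y1plus_MOB (- hi) (- lo) x (- y) = - Y1minus_MOB lo hi x y"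
proof -
  have "(- y - - hi * (1 - x)) / x = - ((y - hi * (1 - x)) / x)"
    by (simp add: minus_divide_left)
  then show ?thesis unfolding Y1plus_MOB_def Y1minus_MOB_def by (simp add: min_def max_def)
qed

lemma Y0minus_MOB_neg: "Y0minus_MOB (- hi) (- lo) x (- y) = - Y0plus_MOB lo hi x y"
proof -
  have "(- y - - lo * x) / (1 - x) = - ((y - lo * x) / (1 - x))"
    by (simp add: minus_divide_left)
  then show ?thesis unfolding Y0minus_MOB_def Y0plus_MOB_def by (simp add: min_def max_def)
qed

lemma Y1minus_Y0plus_mixture:
  fixes x y lo hi :: real
  assumes "0 < x" "x < 1" "lo \<le> y" "y \<le> hi"
  shows "x * Y1minus_MOB lo hi x y + (1 - x) * Y0plus_MOB lo hi x y = y"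
  using Y1plus_Y0minus_mixture[of x "- hi" "- y" "- lo"] assms
  by (simp add: Y1plus_MOB_neg Y0minus_MOB_neg algebra_simps)

lemma MOB_plus_parametrization:
  fixes x y lo hi :: real
  assumes "0 < x" "x < 1" "lo \<le> y" "y \<le> hi"
  shows "Y1plus_MOB lo hi x y = y + (1 - x) * Dplus_MOB lo hi x y"
    and "Y0minus_MOB lo hi x y = y - x * Dplus_MOB lo hi x y"
  using Y1plus_Y0minus_mixture[OF assms] unfolding Dplus_MOB_def by (simp_all add: algebra_simps)

lemma MOB_minus_parametrization:
  fixes x y lo hi :: real
  assumes "0 < x" "x < 1" "lo \<le> y" "y \<le> hi"
  shows "Y1minus_MOB lo hi x y = y + (1 - x) * Dminus_MOB lo hi x y"
    and "Y0plus_MOB lo hi x y = y - x * Dminus_MOB lo hi x y"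
  using Y1minus_Y0plus_mixture[OF assms] unfolding Dminus_MOB_def by (simp_all add: algebra_simps)

lemma MOB_feasible_iff:
  fixes x y lo hi d :: real
  assumes x: "0 < x" "x < 1" and y: "lo \<le> y" "y \<le> hi"
  defines "A \<equiv> y + (1 - x) * d" and "B \<equiv> y - x * d"
  shows "(lo \<le> A \<and> A \<le> hi \<and> lo \<le> B \<and> B \<le> hi)
         \<longleftrightarrow> Dminus_MOB lo hi x y \<le> d \<and> d \<le> Dplus_MOB lo hi x y"
proof -
  note P = MOB_plus_parametrization[OF assms(1-4)]
  note Q = MOB_minus_parametrization[OF assms(1-4)]
  have mix: "x * A = y - (1 - x) * B" unfolding A_def B_def by (simp add: algebra_simps)
  have up: "d \<le> Dplus_MOB lo hi x y \<longleftrightarrow> A \<le> Y1plus_MOB lo hi x y"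
   and up': "d \<le> Dplus_MOB lo hi x y \<longleftrightarrow> Y0minus_MOB lo hi x y \<le> B"
   and dn: "Dminus_MOB lo hi x y \<le> d \<longleftrightarrow> Y1minus_MOB lo hi x y \<le> A"
   and dn': "Dminus_MOB lo hi x y \<le> d \<longleftrightarrow> B \<le> Y0plus_MOB lo hi x y"
    unfolding P Q A_def B_def using x by simp_all
  show ?thesis
  proof
    assume AB: "lo \<le> A \<and> A \<le> hi \<and> lo \<le> B \<and> B \<le> hi"
    have "(1 - x) * lo \<le> (1 - x) * B" "(1 - x) * B \<le> (1 - x) * hi"
      using AB x by (simp_all add: mult_left_mono)
    then have "x * A \<le> y - lo * (1 - x)" "y - hi * (1 - x) \<le> x * A"
      unfolding mix by (simp_all add: algebra_simps)
    then have "A \<le> Y1plus_MOB lo hi x y" "Y1minus_MOB lo hi x y \<le> A"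
      unfolding Y1plus_MOB_def Y1minus_MOB_def using AB x
      by (simp_all add: pos_le_divide_eq pos_divide_le_eq mult.commute)
    then show "Dminus_MOB lo hi x y \<le> d \<and> d \<le> Dplus_MOB lo hi x y" using up dn by simp
  next
    assume "Dminus_MOB lo hi x y \<le> d \<and> d \<le> Dplus_MOB lo hi x y"
    then have "A \<le> Y1plus_MOB lo hi x y" "Y1minus_MOB lo hi x y \<le> A"
      "Y0minus_MOB lo hi x y \<le> B" "B \<le> Y0plus_MOB lo hi x y"
      using up up' dn dn' by simp_all
    then show "lo \<le> A \<and> A \<le> hi \<and> lo \<le> B \<and> B \<le> hi"
      unfolding Y1plus_MOB_def Y1minus_MOB_def Y0minus_MOB_def Y0plus_MOB_def by simp
  qed
qed

lemma MOB_interval_bounds: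
  fixes x y A B lo hi :: real
  assumes x: "0 < x" "x < 1" and AB: "A \<in> {lo..hi}" "B \<in> {lo..hi}"
    and y: "y = x * A + (1 - x) * B"
  shows "B \<le> A \<Longrightarrow> A - B \<in> {0 .. Dplus_MOB lo hi x y} \<and>
           A \<in> {y .. Y1plus_MOB lo hi x y} \<and> B \<in> {Y0minus_MOB lo hi x y .. y}"
    and "A \<le> B \<Longrightarrow> A - B \<in> {Dminus_MOB lo hi x y .. 0} \<and>
           A \<in> {Y1minus_MOB lo hi x y .. y} \<and> B \<in> {y .. Y0plus_MOB lo hi x y}"
proof -
  have "y \<in> {lo..hi}"
    using convexD[OF convex_real_interval(5) AB, of x "1 - x"] x unfolding y by simp
  then have yb: "lo \<le> y" "y \<le> hi" by simp_all
  have A: "A = y + (1 - x) * (A - B)" and B: "B = y - x * (A - B)"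
    unfolding y by (simp_all add: algebra_simps)
  have fe: "Dminus_MOB lo hi x y \<le> A - B" "A - B \<le> Dplus_MOB lo hi x y"
    using MOB_feasible_iff[OF x yb, of "A - B"] AB A B by simp_all
  then have Dp: "(1 - x) * (A - B) \<le> (1 - x) * Dplus_MOB lo hi x y" "x * (A - B) \<le> x * Dplus_MOB lo hi x y"
    and Dm: "(1 - x) * Dminus_MOB lo hi x y \<le> (1 - x) * (A - B)" "x * Dminus_MOB lo hi x y \<le> x * (A - B)"
    using x by simp_all
  note P = MOB_plus_parametrization[OF x yb] and Q = MOB_minus_parametrization[OF x yb]
  show "B \<le> A \<Longrightarrow> A - B \<in> {0 .. Dplus_MOB lo hi x y} \<and>
           A \<in> {y .. Y1plus_MOB lo hi x y} \<and> B \<in> {Y0minus_MOB lo hi x y .. y}"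
  proof -
    assume "B \<le> A"
    then have "0 \<le> (1 - x) * (A - B)" "0 \<le> x * (A - B)" using x by simp_all
    then show ?thesis using fe Dp P A B \<open>B \<le> A\<close> by simp
  qed
  show "A \<le> B \<Longrightarrow> A - B \<in> {Dminus_MOB lo hi x y .. 0} \<and>
           A \<in> {Y1minus_MOB lo hi x y .. y} \<and> B \<in> {y .. Y0plus_MOB lo hi x y}"
  proof -
    assume "A \<le> B"
    then have "(1 - x) * (A - B) \<le> 0" "x * (A - B) \<le> 0" using x by (simp_all add: mult_nonneg_nonpos)
    then show ?thesis using fe Dm Q A B \<open>A \<le> B\<close> by simp
  qed
qed

lemma standing_evt_sets:
  assumes "standing M X Y N lo hi"
  shows "evt M (\<lambda>\<omega>. N \<omega> = m) \<in> sets M" "evt M (\<lambda>\<omega>. X \<omega> = x \<and> N \<omega> = m) \<in> sets M"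
proof -
  have [measurable]: "X \<in> M \<rightarrow>\<^sub>M count_space UNIV" "N \<in> M \<rightarrow>\<^sub>M count_space UNIV"
    using assms unfolding standing_def by auto
  show "evt M (\<lambda>\<omega>. N \<omega> = m) \<in> sets M" "evt M (\<lambda>\<omega>. X \<omega> = x \<and> N \<omega> = m) \<in> sets M"
    unfolding evt_def by measurable
qed

lemma measure_mult_cmean:
  assumes "B \<in> sets M" "emeasure M B \<noteq> \<infinity>"
  shows "measure M B * cmean M f B = (\<integral>\<omega>. indicator B \<omega> * f \<omega> \<partial>M)"
proof (cases "measure M B = 0")
  case True
  then have "B \<in> null_sets M"
    using assms by (simp add: null_sets_def emeasure_eq_ennreal_measure)
  then have "AE \<omega> in M. indicator B \<omega> * f \<omega> = 0"
    by (rule AE_mp[OF AE_not_in]) simp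
  then show ?thesis using True by (simp add: integral_eq_zero_AE)
qed (simp add: cmean_def)

lemma
  fixes M :: "'a measure" and X :: "'a \<Rightarrow> bool" and Y :: "'a \<Rightarrow> real" and N :: "'a \<Rightarrow> 'n"
  assumes st: "standing M X Y N lo hi"
  shows standing_nbhd_prob_split: "nbhd_prob M N m = grp_prob M X N True m + grp_prob M X N False m"
    and standing_nbhd_X_eq: "nbhd_X M X N m = grp_prob M X N True m / nbhd_prob M N m"
    and standing_nbhd_Y_eq: "nbhd_Y M Y N m =
      (grp_prob M X N True m * grp_Y M X Y N True m + grp_prob M X N False m * grp_Y M X Y N False m)
      / nbhd_prob M N m"
    and standing_cmean_YX_eq: "cmean M (\<lambda>\<omega>. Y \<omega> * of_bool (X \<omega>)) (evt M (\<lambda>\<omega>. N \<omega> = m)) =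
      grp_prob M X N True m * grp_Y M X Y N True m / nbhd_prob M N m"
proof -
  interpret prob_space M using st unfolding standing_def by simp
  define E where "E = evt M (\<lambda>\<omega>. N \<omega> = m)"
  define G where "G b = evt M (\<lambda>\<omega>. X \<omega> = b \<and> N \<omega> = m)" for b
  have G: "G b \<in> sets M" for b unfolding G_def by (rule standing_evt_sets[OF st])
  have cell: "(\<integral>\<omega>. indicator (G b) \<omega> * Y \<omega> \<partial>M) = grp_prob M X N b m * grp_Y M X Y N b m" for b
    using measure_mult_cmean[OF G] unfolding grp_prob_def grp_Y_def G_def by simp
  have "E = G True \<union> G False" "G True \<inter> G False = {}" unfolding E_def G_def evt_def by auto
  then show "nbhd_prob M N m = grp_prob M X N True m + grp_prob M X N False m"
    unfolding nbhd_prob_def grp_prob_def E_def[symmetric] G_def[symmetric]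
    using finite_measure_Union[OF G G] by simp
  have "(\<lambda>\<omega>. indicator E \<omega> * of_bool (X \<omega>)) = (indicator (G True) :: 'a \<Rightarrow> real)"
    unfolding E_def G_def evt_def by (auto simp: indicator_def)
  then show "nbhd_X M X N m = grp_prob M X N True m / nbhd_prob M N m"
    unfolding nbhd_X_def cmean_def nbhd_prob_def grp_prob_def E_def[symmetric] G_def[symmetric]
    using G by simp
  have iY: "integrable M (\<lambda>\<omega>. indicator (G b) \<omega> * Y \<omega>)" for b
    using integrable_real_mult_indicator[OF G, of Y] st unfolding standing_def by (simp add: mult.commute)
  have "(\<lambda>\<omega>. indicator E \<omega> * Y \<omega>) = (\<lambda>\<omega>. indicator (G True) \<omega> * Y \<omega> + indicator (G False) \<omega> * Y \<omega>)"
    unfolding E_def G_def evt_def by (auto simp: indicator_def)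
  then show "nbhd_Y M Y N m =
      (grp_prob M X N True m * grp_Y M X Y N True m + grp_prob M X N False m * grp_Y M X Y N False m)
      / nbhd_prob M N m"
    unfolding nbhd_Y_def cmean_def nbhd_prob_def E_def[symmetric] using iY cell by simp
  have "(\<lambda>\<omega>. indicator E \<omega> * (Y \<omega> * of_bool (X \<omega>))) = (\<lambda>\<omega>. indicator (G True) \<omega> * Y \<omega>)"
    unfolding E_def G_def evt_def by (auto simp: indicator_def)
  then show "cmean M (\<lambda>\<omega>. Y \<omega> * of_bool (X \<omega>)) (evt M (\<lambda>\<omega>. N \<omega> = m)) =
      grp_prob M X N True m * grp_Y M X Y N True m / nbhd_prob M N m"
    unfolding cmean_def nbhd_prob_def E_def[symmetric] using cell by simp
qed

lemma
  fixes M :: "'a measure" and X :: "'a \<Rightarrow> bool" and Y :: "'a \<Rightarrow> real" and N :: "'a \<Rightarrow> 'n"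
  assumes st: "standing M X Y N lo hi" and pn: "0 < nbhd_prob M N n"
  defines "x \<equiv> nbhd_X M X N n"
  shows standing_nbhd_Y_mixture:
      "nbhd_Y M Y N n = x * grp_Y M X Y N True n + (1 - x) * grp_Y M X Y N False n"
    and standing_nbhd_cov_eq: "nbhd_cov M X Y N n = x * (1 - x) * nbhd_D M X Y N n"
    and standing_grp_prob_eq:
      "grp_prob M X N True n = x * nbhd_prob M N n" "grp_prob M X N False n = (1 - x) * nbhd_prob M N n"
proof -
  note split = standing_nbhd_prob_split[OF st, of n]
  show p1: "grp_prob M X N True n = x * nbhd_prob M N n"
    unfolding x_def standing_nbhd_X_eq[OF st] using pn by simp
  show p0: "grp_prob M X N False n = (1 - x) * nbhd_prob M N n"
    using split p1 by (simp add: algebra_simps)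
  show mix: "nbhd_Y M Y N n = x * grp_Y M X Y N True n + (1 - x) * grp_Y M X Y N False n"
    unfolding standing_nbhd_Y_eq[OF st] p1 p0 using pn by (simp add: field_simps)
  show "nbhd_cov M X Y N n = x * (1 - x) * nbhd_D M X Y N n"
    unfolding nbhd_cov_def standing_cmean_YX_eq[OF st] p1 mix nbhd_D_def x_def[symmetric]
    using pn by (simp add: algebra_simps)
qed

lemma standing_grp_Y_mem:
  assumes st: "standing M X Y N lo hi" and pn: "0 < nbhd_prob M N n"
    and xn: "0 < nbhd_X M X N n" "nbhd_X M X N n < 1"
  shows "grp_Y M X Y N b n \<in> {lo..hi}"
proof -
  have "0 < grp_prob M X N b n"
    using standing_grp_prob_eq[OF st pn] pn xn by (cases b) simp_all
  then show ?thesis using st unfolding standing_def by simp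
qed

lemma standing_nbhd_Y_mem:
  assumes st: "standing M X Y N lo hi" and pn: "0 < nbhd_prob M N n"
    and xn: "0 < nbhd_X M X N n" "nbhd_X M X N n < 1"
  shows "nbhd_Y M Y N n \<in> {lo..hi}"
  using convexD[OF convex_real_interval(5) standing_grp_Y_mem[OF assms] standing_grp_Y_mem[OF assms],
      of "nbhd_X M X N n" "1 - nbhd_X M X N n"] xn
  by (simp add: standing_nbhd_Y_mixture[OF st pn])

lemma standing_grp_prob_sum:
  fixes N :: "'a \<Rightarrow> 'n::finite"
  assumes st: "standing M X Y N lo hi"
  shows "(\<Sum>a\<in>UNIV. grp_prob M X N (fst a) (snd a)) = 1"
proof -
  interpret prob_space M using st unfolding standing_def by simp
  let ?A = "\<lambda>a. evt M (\<lambda>\<omega>. X \<omega> = fst a \<and> N \<omega> = snd a)"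
  have "measure M (\<Union>a. ?A a) = (\<Sum>a\<in>UNIV. measure M (?A a))"
    using standing_evt_sets[OF st]
    by (intro finite_measure_finite_Union) (auto simp: disjoint_family_on_def evt_def)
  moreover have "(\<Union>a. ?A a) = space M" unfolding evt_def by auto
  ultimately show ?thesis unfolding grp_prob_def by (simp add: prob_space)
qed

definition cell_pmf :: "(bool \<times> 'n::finite \<Rightarrow> real) \<Rightarrow> (bool \<Rightarrow> 'n \<Rightarrow> real) \<Rightarrow> (bool \<times> real \<times> 'n) pmf"
  where "cell_pmf w val = map_pmf (\<lambda>(b, m). (b, val b m, m)) (embed_pmf w)"

lemma
  fixes w :: "bool \<times> 'n::finite \<Rightarrow> real"
  assumes w_nonneg: "\<And>a. 0 \<le> w a" and w_sum: "(\<Sum>a\<in>UNIV. w a) = 1"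
  shows cell_pmf_grp_prob: "grp_prob (measure_pmf (cell_pmf w val)) pX pN b m = w (b, m)"
    and cell_pmf_grp_Y: "0 < w (b, m) \<Longrightarrow> grp_Y (measure_pmf (cell_pmf w val)) pX pY pN b m = val b m"
proof -
  let ?q = "cell_pmf w val"
  have "(\<integral>\<^sup>+a. ennreal (w a) \<partial>count_space UNIV) = 1"
    using w_sum w_nonneg by (simp add: nn_integral_count_space_finite)
  from pmf_embed_pmf[OF w_nonneg this] have pmf_w: "pmf (embed_pmf w) a = w a" for a .
  have cell: "(\<integral>\<omega>. indicator (evt (measure_pmf ?q) (\<lambda>\<omega>. pX \<omega> = b \<and> pN \<omega> = m)) \<omega> * h \<omega> \<partial>?q)
      = w (b, m) * h (b, val b m, m)" for h :: "bool \<times> real \<times> 'n \<Rightarrow> real"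
  proof -
    have "(\<integral>\<omega>. indicator (evt (measure_pmf ?q) (\<lambda>\<omega>. pX \<omega> = b \<and> pN \<omega> = m)) \<omega> * h \<omega> \<partial>?q)
        = (\<Sum>a\<in>UNIV. indicator {(b, m)} a * h (fst a, val (fst a) (snd a), snd a) * w a)"
      unfolding cell_pmf_def integral_map_pmf
      by (subst integral_measure_pmf_real[where A=UNIV])
         (simp_all add: pmf_w evt_def indicator_def split_beta' prod_eq_iff)
    also have "\<dots> = (\<Sum>a\<in>UNIV. if a = (b, m) then h (fst a, val (fst a) (snd a), snd a) * w a else 0)"
      by (rule sum.cong) (simp_all add: indicator_def)
    finally show ?thesis by simp
  qed
  show grp_prob: "grp_prob (measure_pmf ?q) pX pN b m = w (b, m)"
    using cell[of "\<lambda>_. 1"] unfolding grp_prob_def by simp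
  show "0 < w (b, m) \<Longrightarrow> grp_Y (measure_pmf ?q) pX pY pN b m = val b m"
    using cell[of pY] unfolding grp_Y_def cmean_def grp_prob_def[symmetric] grp_prob by simp
qed

lemma exists_pmf_with_cell_means:
  fixes M :: "'a measure" and X :: "'a \<Rightarrow> bool" and Y :: "'a \<Rightarrow> real" and N :: "'a \<Rightarrow> 'n::finite"
    and val :: "bool \<Rightarrow> 'n \<Rightarrow> real"
  assumes st: "standing M X Y N lo hi"
    and val_mem: "\<And>b m. 0 < grp_prob M X N b m \<Longrightarrow> val b m \<in> {lo..hi}"
    and val_sum: "\<And>m. grp_prob M X N True m * val True m + grp_prob M X N False m * val False m
      = grp_prob M X N True m * grp_Y M X Y N True m + grp_prob M X N False m * grp_Y M X Y N False m"
  obtains q where "standing (measure_pmf q) pX pY pN lo hi" "same_observed q M X Y N"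
    "\<And>b m. 0 < grp_prob M X N b m \<Longrightarrow> grp_Y (measure_pmf q) pX pY pN b m = val b m"
proof -
  define w where "w a = grp_prob M X N (fst a) (snd a)" for a :: "bool \<times> 'n"
  define q where "q = cell_pmf w val"
  have w_nonneg: "0 \<le> w a" for a unfolding w_def grp_prob_def by simp
  have w_sum: "(\<Sum>a\<in>UNIV. w a) = 1" unfolding w_def by (rule standing_grp_prob_sum[OF st])
  note grp_prob_q = cell_pmf_grp_prob[OF w_nonneg w_sum, of val, folded q_def]
  note grp_Y_q = cell_pmf_grp_Y[OF w_nonneg w_sum, of _ _ val, folded q_def]
  have cell_mass_q: "w (b, m) * grp_Y (measure_pmf q) pX pY pN b m = w (b, m) * val b m" for b m
    using grp_Y_q[of b m] w_nonneg[of "(b, m)"] by fastforce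
  have st_q: "standing (measure_pmf q) pX pY pN lo hi"
    unfolding standing_def
  proof (intro conjI allI impI)
    show "prob_space (measure_pmf q)" by (rule measure_pmf.prob_space_axioms)
    show "integrable (measure_pmf q) pY"
      by (rule integrable_measure_pmf_finite) (simp add: q_def cell_pmf_def)
    show "lo \<le> hi" using st unfolding standing_def by simp
    fix b m assume "0 < grp_prob (measure_pmf q) pX pN b m"
    then have "0 < grp_prob M X N b m" unfolding grp_prob_q w_def by simp
    then show "lo \<le> grp_Y (measure_pmf q) pX pY pN b m" "grp_Y (measure_pmf q) pX pY pN b m \<le> hi"
      using grp_Y_q val_mem unfolding w_def by auto
  qed simp_all
  moreover have "same_observed q M X Y N"
    unfolding same_observed_def standing_nbhd_X_eq[OF st] standing_nbhd_Y_eq[OF st]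
      standing_nbhd_prob_split[OF st] standing_nbhd_X_eq[OF st_q] standing_nbhd_Y_eq[OF st_q]
      standing_nbhd_prob_split[OF st_q] grp_prob_q cell_mass_q
    by (simp add: w_def val_sum)
  moreover have "grp_Y (measure_pmf q) pX pY pN b m = val b m" if "0 < grp_prob M X N b m" for b m
    using grp_Y_q that unfolding w_def by simp
  ultimately show ?thesis using that by blast
qed

lemma exists_pmf_with_group_means:
  fixes M :: "'a measure" and X :: "'a \<Rightarrow> bool" and Y :: "'a \<Rightarrow> real" and N :: "'a \<Rightarrow> 'n::finite"
  assumes st: "standing M X Y N lo hi" and pn: "0 < nbhd_prob M N n"
    and xn: "0 < nbhd_X M X N n" "nbhd_X M X N n < 1"
    and AB: "A \<in> {lo..hi}" "B \<in> {lo..hi}"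
    and mix: "nbhd_X M X N n * A + (1 - nbhd_X M X N n) * B = nbhd_Y M Y N n"
  obtains q where "standing (measure_pmf q) pX pY pN lo hi" "same_observed q M X Y N"
    "grp_Y (measure_pmf q) pX pY pN True n = A" "grp_Y (measure_pmf q) pX pY pN False n = B"
    "nbhd_cov (measure_pmf q) pX pY pN n = nbhd_X M X N n * (1 - nbhd_X M X N n) * (A - B)"
proof -
  define val where "val b m = (if m = n then (if b then A else B) else grp_Y M X Y N b m)" for b m
  have "val b m \<in> {lo..hi}" if "0 < grp_prob M X N b m" for b m
    using st that AB unfolding val_def standing_def by auto
  moreover have "grp_prob M X N True m * val True m + grp_prob M X N False m * val False m
      = grp_prob M X N True m * grp_Y M X Y N True m + grp_prob M X N False m * grp_Y M X Y N False m" for m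
  proof (cases "m = n")
    case True
    have "grp_prob M X N True n * u + grp_prob M X N False n * v
        = nbhd_prob M N n * (nbhd_X M X N n * u + (1 - nbhd_X M X N n) * v)" for u v
      unfolding standing_grp_prob_eq[OF st pn] by (simp add: algebra_simps)
    then show ?thesis using mix unfolding True val_def standing_nbhd_Y_mixture[OF st pn] by simp
  qed (simp add: val_def)
  ultimately obtain q where st_q: "standing (measure_pmf q) pX pY pN lo hi"
    and same: "same_observed q M X Y N"
    and q_val: "\<And>b m. 0 < grp_prob M X N b m \<Longrightarrow> grp_Y (measure_pmf q) pX pY pN b m = val b m"
    using exists_pmf_with_cell_means[OF st] by blast
  have "0 < grp_prob M X N b n" for b
    using standing_grp_prob_eq[OF st pn] pn xn by (cases b) simp_all
  then have A: "grp_Y (measure_pmf q) pX pY pN True n = A" and B: "grp_Y (measure_pmf q) pX pY pN False n = B"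
    using q_val unfolding val_def by auto
  have "nbhd_prob (measure_pmf q) pN n = nbhd_prob M N n" "nbhd_X (measure_pmf q) pX pN n = nbhd_X M X N n"
    using same unfolding same_observed_def by auto
  then have "nbhd_cov (measure_pmf q) pX pY pN n = nbhd_X M X N n * (1 - nbhd_X M X N n) * (A - B)"
    using standing_nbhd_cov_eq[OF st_q, of n] pn unfolding nbhd_D_def A B by simp
  with st_q same A B show ?thesis using that by blast
qed

lemma sharpness_on_interval:
  fixes M :: "'a measure" and X :: "'a \<Rightarrow> bool" and Y :: "'a \<Rightarrow> real" and N :: "'a \<Rightarrow> 'n::finite"
  assumes st: "standing M X Y N lo hi" and pn: "0 < nbhd_prob M N n"
    and xn: "0 < nbhd_X M X N n" "nbhd_X M X N n < 1"
  defines "x \<equiv> nbhd_X M X N n" and "y \<equiv> nbhd_Y M Y N n"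
  assumes ab: "Dminus_MOB lo hi x y \<le> a" "b \<le> Dplus_MOB lo hi x y"
    and sign: "\<forall>d \<in> {a..b}. P (x * (1 - x) * d)"
  shows "\<forall>d \<in> {a..b}. \<exists>q. standing (measure_pmf q) pX pY pN lo hi \<and> same_observed q M X Y N \<and>
           P (nbhd_cov (measure_pmf q) pX pY pN n) \<and> nbhd_D (measure_pmf q) pX pY pN n = d"
    and "\<forall>v \<in> {y + (1 - x) * a .. y + (1 - x) * b}. \<exists>q.
           standing (measure_pmf q) pX pY pN lo hi \<and> same_observed q M X Y N \<and>
           P (nbhd_cov (measure_pmf q) pX pY pN n) \<and> grp_Y (measure_pmf q) pX pY pN True n = v"
    and "\<forall>v \<in> {y - x * b .. y - x * a}. \<exists>q.
           standing (measure_pmf q) pX pY pN lo hi \<and> same_observed q M X Y N \<and>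
           P (nbhd_cov (measure_pmf q) pX pY pN n) \<and> grp_Y (measure_pmf q) pX pY pN False n = v"
proof -
  have x: "0 < x" "x < 1" using xn unfolding x_def by simp_all
  have yb: "lo \<le> y" "y \<le> hi" using standing_nbhd_Y_mem[OF st pn xn] unfolding y_def by simp_all
  have realize: "\<exists>q. standing (measure_pmf q) pX pY pN lo hi \<and> same_observed q M X Y N \<and>
      P (nbhd_cov (measure_pmf q) pX pY pN n) \<and> nbhd_D (measure_pmf q) pX pY pN n = d \<and>
      grp_Y (measure_pmf q) pX pY pN True n = y + (1 - x) * d \<and>
      grp_Y (measure_pmf q) pX pY pN False n = y - x * d" if d: "a \<le> d" "d \<le> b" for d
  proof -
    have "y + (1 - x) * d \<in> {lo..hi}" "y - x * d \<in> {lo..hi}"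
      using MOB_feasible_iff[OF x yb, of d] ab d by simp_all
    moreover have "x * (y + (1 - x) * d) + (1 - x) * (y - x * d) = y" by (simp add: algebra_simps)
    ultimately obtain q where q: "standing (measure_pmf q) pX pY pN lo hi" "same_observed q M X Y N"
      "grp_Y (measure_pmf q) pX pY pN True n = y + (1 - x) * d"
      "grp_Y (measure_pmf q) pX pY pN False n = y - x * d"
      "nbhd_cov (measure_pmf q) pX pY pN n = x * (1 - x) * d"
      using exists_pmf_with_group_means[OF st pn xn, of "y + (1 - x) * d" "y - x * d"]
      unfolding x_def[symmetric] y_def[symmetric] by (auto simp: algebra_simps)
    have "P (nbhd_cov (measure_pmf q) pX pY pN n)" using sign d unfolding q(5) by simp
    moreover have "nbhd_D (measure_pmf q) pX pY pN n = d"
      unfolding nbhd_D_def q(3,4) by (simp add: algebra_simps)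
    ultimately show ?thesis using q by blast
  qed
  show "\<forall>d \<in> {a..b}. \<exists>q. standing (measure_pmf q) pX pY pN lo hi \<and> same_observed q M X Y N \<and>
      P (nbhd_cov (measure_pmf q) pX pY pN n) \<and> nbhd_D (measure_pmf q) pX pY pN n = d"
    using realize by (meson atLeastAtMost_iff)
  show "\<forall>v \<in> {y + (1 - x) * a .. y + (1 - x) * b}. \<exists>q.
      standing (measure_pmf q) pX pY pN lo hi \<and> same_observed q M X Y N \<and>
      P (nbhd_cov (measure_pmf q) pX pY pN n) \<and> grp_Y (measure_pmf q) pX pY pN True n = v"
  proof
    fix v assume v: "v \<in> {y + (1 - x) * a .. y + (1 - x) * b}"
    define d where "d = (v - y) / (1 - x)"
    have "a \<le> d" "d \<le> b" "v = y + (1 - x) * d"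
      using v x unfolding d_def by (simp_all add: field_simps)
    then show "\<exists>q. standing (measure_pmf q) pX pY pN lo hi \<and> same_observed q M X Y N \<and>
        P (nbhd_cov (measure_pmf q) pX pY pN n) \<and> grp_Y (measure_pmf q) pX pY pN True n = v"
      using realize by blast
  qed
  show "\<forall>v \<in> {y - x * b .. y - x * a}. \<exists>q.
      standing (measure_pmf q) pX pY pN lo hi \<and> same_observed q M X Y N \<and>
      P (nbhd_cov (measure_pmf q) pX pY pN n) \<and> grp_Y (measure_pmf q) pX pY pN False n = v"
  proof
    fix v assume v: "v \<in> {y - x * b .. y - x * a}"
    define d where "d = (y - v) / x"
    have "a \<le> d" "d \<le> b" "v = y - x * d"
      using v x unfolding d_def by (simp_all add: field_simps)
    then show "\<exists>q. standing (measure_pmf q) pX pY pN lo hi \<and> same_observed q M X Y N \<and>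
        P (nbhd_cov (measure_pmf q) pX pY pN n) \<and> grp_Y (measure_pmf q) pX pY pN False n = v"
      using realize by blast
  qed
qed

theorem proposition11:
  fixes M :: "'a measure" and X :: "'a \<Rightarrow> bool" and Y :: "'a \<Rightarrow> real"
    and N :: "'a \<Rightarrow> 'n::finite" and lo hi :: real and n :: 'n
  assumes st: "standing M X Y N lo hi"
    and pn: "nbhd_prob M N n > 0"
    and xn: "0 < nbhd_X M X N n" "nbhd_X M X N n < 1"
  defines "xb \<equiv> nbhd_X M X N n" and "yb \<equiv> nbhd_Y M Y N n"
  shows
    "(nbhd_cov M X Y N n \<ge> 0 \<longrightarrow>
        nbhd_D M X Y N n \<in> {0 .. Dplus_MOB lo hi xb yb} \<and>
        grp_Y M X Y N True n \<in> {yb .. Y1plus_MOB lo hi xb yb} \<and>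
        grp_Y M X Y N False n \<in> {Y0minus_MOB lo hi xb yb .. yb})
   \<and> (nbhd_cov M X Y N n \<le> 0 \<longrightarrow>
        nbhd_D M X Y N n \<in> {Dminus_MOB lo hi xb yb .. 0} \<and>
        grp_Y M X Y N True n \<in> {Y1minus_MOB lo hi xb yb .. yb} \<and>
        grp_Y M X Y N False n \<in> {yb .. Y0plus_MOB lo hi xb yb})
   \<and> (nbhd_cov M X Y N n \<ge> 0 \<longrightarrow>
        (\<forall>d \<in> {0 .. Dplus_MOB lo hi xb yb}. \<exists>q.
            standing (measure_pmf q) pX pY pN lo hi \<and> same_observed q M X Y N \<and>
            nbhd_cov (measure_pmf q) pX pY pN n \<ge> 0 \<and> nbhd_D (measure_pmf q) pX pY pN n = d) \<and>
        (\<forall>v \<in> {yb .. Y1plus_MOB lo hi xb yb}. \<exists>q.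
            standing (measure_pmf q) pX pY pN lo hi \<and> same_observed q M X Y N \<and>
            nbhd_cov (measure_pmf q) pX pY pN n \<ge> 0 \<and> grp_Y (measure_pmf q) pX pY pN True n = v) \<and>
        (\<forall>v \<in> {Y0minus_MOB lo hi xb yb .. yb}. \<exists>q.
            standing (measure_pmf q) pX pY pN lo hi \<and> same_observed q M X Y N \<and>
            nbhd_cov (measure_pmf q) pX pY pN n \<ge> 0 \<and> grp_Y (measure_pmf q) pX pY pN False n = v))
   \<and> (nbhd_cov M X Y N n \<le> 0 \<longrightarrow>
        (\<forall>d \<in> {Dminus_MOB lo hi xb yb .. 0}. \<exists>q.
            standing (measure_pmf q) pX pY pN lo hi \<and> same_observed q M X Y N \<and>
            nbhd_cov (measure_pmf q) pX pY pN n \<le> 0 \<and> nbhd_D (measure_pmf q) pX pY pN n = d) \<and>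
        (\<forall>v \<in> {Y1minus_MOB lo hi xb yb .. yb}. \<exists>q.
            standing (measure_pmf q) pX pY pN lo hi \<and> same_observed q M X Y N \<and>
            nbhd_cov (measure_pmf q) pX pY pN n \<le> 0 \<and> grp_Y (measure_pmf q) pX pY pN True n = v) \<and>
        (\<forall>v \<in> {yb .. Y0plus_MOB lo hi xb yb}. \<exists>q.
            standing (measure_pmf q) pX pY pN lo hi \<and> same_observed q M X Y N \<and>
            nbhd_cov (measure_pmf q) pX pY pN n \<le> 0 \<and> grp_Y (measure_pmf q) pX pY pN False n = v))"
proof -
  have x: "0 < xb" "xb < 1" using xn unfolding xb_def by simp_all
  have y: "lo \<le> yb" "yb \<le> hi" using standing_nbhd_Y_mem[OF st pn xn] unfolding yb_def by simp_all
  have cov: "nbhd_cov M X Y N n = xb * (1 - xb) * nbhd_D M X Y N n"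
    using standing_nbhd_cov_eq[OF st pn] unfolding xb_def .
  have cov_sign: "0 \<le> nbhd_cov M X Y N n \<longleftrightarrow> grp_Y M X Y N False n \<le> grp_Y M X Y N True n"
    "nbhd_cov M X Y N n \<le> 0 \<longleftrightarrow> grp_Y M X Y N True n \<le> grp_Y M X Y N False n"
    unfolding cov nbhd_D_def using x by (simp_all add: zero_le_mult_iff mult_le_0_iff)
  note bounds = MOB_interval_bounds[OF x standing_grp_Y_mem[OF st pn xn] standing_grp_Y_mem[OF st pn xn],
      folded xb_def yb_def, OF standing_nbhd_Y_mixture[OF st pn, folded xb_def yb_def]]
  have D0: "Dminus_MOB lo hi xb yb \<le> 0" "0 \<le> Dplus_MOB lo hi xb yb"
    using MOB_feasible_iff[OF x y, of 0] y by simp_all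
  have nonneg: "\<forall>d \<in> {0 .. Dplus_MOB lo hi xb yb}. 0 \<le> xb * (1 - xb) * d"
    using x by simp
  have nonpos: "\<forall>d \<in> {Dminus_MOB lo hi xb yb .. 0}. xb * (1 - xb) * d \<le> 0"
    using x by (simp add: mult_nonneg_nonpos)
  note sharp = sharpness_on_interval[OF st pn xn, folded xb_def yb_def]
  note sharp_nonneg = sharp[where P = "\<lambda>c. 0 \<le> c", OF D0(1) order_refl nonneg,
      unfolded MOB_plus_parametrization[OF x y, symmetric] mult_zero_right add_0_right diff_0_right]
  note sharp_nonpos = sharp[where P = "\<lambda>c. c \<le> 0", OF order_refl D0(2) nonpos,
      unfolded MOB_minus_parametrization[OF x y, symmetric] mult_zero_right add_0_right diff_0_right]
  show ?thesis
    using bounds[unfolded cov_sign[symmetric]] sharp_nonneg sharp_nonpos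
    unfolding nbhd_D_def[of M X Y N n] by simp
qed

end
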